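(* Let $g>\tfrac12$, $M_{\mathrm{I}},M_{\mathrm{II}}\in\mathbb{Z}_{\ge0}$, $M=M_{\mathrm{I}}+M_{\mathrm{II}}$, $M'=\frac12(M_{\mathrm{I}}-M_{\mathrm{II}})$, let $\mathcal{D}=((d_1,t_1),\ldots,(d_M,t_M))$ be an ordered list of pairwise distinct seed labels as in the context with $M_{\mathrm{I}}$ of Type I and $M_{\mathrm{II}}$ of Type II, and let $n\in\mathbb{Z}_{\ge0}$. For a seed label $(\mathrm{v},t)$ set $\xi_{(\mathrm{v},\mathrm{I})}(\eta)=L^{(g-\frac12)}_{\mathrm{v}}(-\eta)$, $\xi_{(\mathrm{v},\mathrm{II})}(\eta)=L^{(\frac12-g)}_{\mathrm{v}}(\eta)$, $\tilde{\mathcal{E}}_{(\mathrm{v},\mathrm{I})}=-4(g+\mathrm{v}+\frac12)$, $\tilde{\mathcal{E}}_{(\mathrm{v},\mathrm{II})}=-4(g-\mathrm{v}-\frac12)$, $\tilde\zeta_{(\mathrm{v},\mathrm{I})}(\eta)=2\eta L^{(g+\frac12)}_{\mathrm{v}}(-\eta)$, $\tilde\zeta_{(\mathrm{v},\mathrm{II})}(\eta)=-2(g-\frac12-\mathrm{v})L^{(-g-\frac12)}_{\mathrm{v}}(\eta)$, and set $\mathcal{E}_n=4n$, $\zeta_n(\eta)=-2\eta L^{(g+\frac12)}_{n-1}(\eta)$. Define the $(M+1)\times(M+1)$ matrix $(a_{j,k})$ by: for $1\le k\le M$, $a_{2l-1,k}=(-\tilde{\mathcal{E}}_{(d_k,t_k)})^{l-1}\xi_{(d_k,t_k)}(\eta)$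 and $a_{2l,k}=(-\tilde{\mathcal{E}}_{(d_k,t_k)})^{l-1}\tilde\zeta_{(d_k,t_k)}(\eta)$; and $a_{2l-1,M+1}=(-\mathcal{E}_n)^{l-1}L^{(g-\frac12)}_n(\eta)$, $a_{2l,M+1}=(-\mathcal{E}_n)^{l-1}\zeta_n(\eta)$ (for $1\le l\le[\frac{M+2}{2}]$ in odd rows and $1\le l\le[\frac{M+1}{2}]$ in even rows). Define the $M\times M$ matrix $(b_{j,k})$ by $b_{2l-1,k}=(-\tilde{\mathcal{E}}_{(d_k,t_k)})^{l-1}\xi_{(d_k,t_k)}(\eta)$, $1\le l\le[\frac{M+1}{2}]$, and $b_{2l,k}=(-\tilde{\mathcal{E}}_{(d_k,t_k)})^{l-1}\tilde\zeta_{(d_k,t_k)}(\eta)$, $1\le l\le[\frac M2]$. Then for $\eta>0$, $$P_{\mathcal{D},n}(\eta)=2^{-\frac12M(M+1)}\det(a_{j,k})_{1\le j,k\le M+1}\;\eta^{-([M']+1)([M']+M-2[\frac M2])},$$ $$\Xi_{\mathcal{D}}(\eta)=2^{-\frac12M(M-1)}\det(b_{j,k})_{1\le j,k\le M}\;\eta^{-[M']([M']+M-2[\frac M2])}.$$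
   Context: $[a]$ denotes the greatest integer not exceeding $a$, and $[a]'$ the greatest integer strictly less than $a$. $(a)_k=a(a+1)\cdots(a+k-1)$, $(a)_0=1$. For real $\alpha$ and $m\in\mathbb{Z}_{\ge0}$, $L^{(\alpha)}_m(\eta)=\frac{1}{m!}\sum_{k=0}^m\frac{(-m)_k}{k!}(\alpha+k+1)_{m-k}\eta^k$, and $L^{(\alpha)}_m\equiv0$ for $m<0$. Fix $g>\frac12$. A seed label is a pair $(\mathrm{v},t)$ with $t\in\{\mathrm{I},\mathrm{II}\}$, $\mathrm{v}\in\mathbb{Z}_{\ge0}$ if $t=\mathrm{I}$ and $\mathrm{v}\in\{0,1,\ldots,[g-\frac12]'\}$ if $t=\mathrm{II}$. For $\eta>0$ let $\mu_{(\mathrm{v},\mathrm{I})}(\eta)=e^{\eta}L^{(g-\frac12)}_{\mathrm{v}}(-\eta)$, $\mu_{(\mathrm{v},\mathrm{II})}(\eta)=\eta^{\frac12-g}L^{(\frac12-g)}_{\mathrm{v}}(\eta)$, $P_n(\eta)=L^{(g-\frac12)}_n(\eta)$, and $\mathrm{W}[f_1,\ldots,f_m](\eta)=\det\big(\frac{d^{j-1}f_k}{d\eta^{j-1}}\big)_{1\le j,k\le m}$. For $\mathcal{D}$ as in the claim, $\Xi_{\mathcal{D}}(\eta)=\mathrm{W}[\mu_{(d_1,t_1)},\ldots,\mu_{(d_M,t_M)}](\eta)\,\eta^{(M_{\mathrm{I}}+g-\frac12)M_{\mathrm{II}}}e^{-M_{\mathrm{I}}\eta}$ and $P_{\mathcal{D},n}(\eta)=\mathrm{W}[\mu_{(d_1,t_1)},\ldots,\mu_{(d_M,t_M)},P_n](\eta)\,\eta^{(M_{\mathrm{I}}+g+\frac12)M_{\mathrm{II}}}e^{-M_{\mathrm{I}}\eta}$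 (the multi-indexed Laguerre polynomials). *)

theory Defs
  imports "HOL-Analysis.Analysis"
begin

text \<open>Generalized Laguerre polynomial with real parameter alpha and integer degree m;
  identically zero for negative degree.\<close>
definition lag :: "real \<Rightarrow> int \<Rightarrow> real \<Rightarrow> real" where
  "lag \<alpha> m \<eta> = (if m < 0 then 0 else
     (1 / fact (nat m)) * (\<Sum>k=0..nat m. (pochhammer (- real (nat m)) k / fact k)
        * pochhammer (\<alpha> + real k + 1) (nat m - k) * \<eta> ^ k))"

definition detm :: "nat \<Rightarrow> (nat \<Rightarrow> nat \<Rightarrow> real) \<Rightarrow> real" where
  "detm m A = (\<Sum>p | p permutes {..<m}. of_int (sign p) * (\<Prod>i<m. A i (p i)))"

definition wronskian :: "(real \<Rightarrow> real) list \<Rightarrow> real \<Rightarrow> real" where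
  "wronskian fs \<eta> = detm (length fs) (\<lambda>j k. (deriv ^^ j) (fs ! k) \<eta>)"

datatype stype = TI | TII

type_synonym seed = "nat \<times> stype"

text \<open>Valid seed label for parameter g: type II requires v \<in> {0,..,[g-1/2]'},
  where [a]' = greatest integer strictly less than a = ceiling a - 1.\<close>
definition valid_seed :: "real \<Rightarrow> seed \<Rightarrow> bool" where
  "valid_seed g s = (case s of (v, TI) \<Rightarrow> True
      | (v, TII) \<Rightarrow> int v \<le> \<lceil>g - 1/2\<rceil> - 1)"

definition MI :: "seed list \<Rightarrow> nat" where
  "MI D = length (filter (\<lambda>s. snd s = TI) D)"

definition MII :: "seed list \<Rightarrow> nat" where
  "MII D = length (filter (\<lambda>s. snd s = TII) D)"

definition mu :: "real \<Rightarrow> seed \<Rightarrow> real \<Rightarrow> real" where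
  "mu g s \<eta> = (case s of (v, TI) \<Rightarrow> exp \<eta> * lag (g - 1/2) (int v) (- \<eta>)
      | (v, TII) \<Rightarrow> \<eta> powr (1/2 - g) * lag (1/2 - g) (int v) \<eta>)"

definition Pn :: "real \<Rightarrow> nat \<Rightarrow> real \<Rightarrow> real" where
  "Pn g n \<eta> = lag (g - 1/2) (int n) \<eta>"

definition Xi :: "real \<Rightarrow> seed list \<Rightarrow> real \<Rightarrow> real" where
  "Xi g D \<eta> = wronskian (map (mu g) D) \<eta>
      * \<eta> powr ((real (MI D) + g - 1/2) * real (MII D)) * exp (- real (MI D) * \<eta>)"

definition PD :: "real \<Rightarrow> seed list \<Rightarrow> nat \<Rightarrow> real \<Rightarrow> real" where
  "PD g D n \<eta> = wronskian (map (mu g) D @ [Pn g n]) \<eta>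
      * \<eta> powr ((real (MI D) + g + 1/2) * real (MII D)) * exp (- real (MI D) * \<eta>)"

definition xi :: "real \<Rightarrow> seed \<Rightarrow> real \<Rightarrow> real" where
  "xi g s \<eta> = (case s of (v, TI) \<Rightarrow> lag (g - 1/2) (int v) (- \<eta>)
      | (v, TII) \<Rightarrow> lag (1/2 - g) (int v) \<eta>)"

definition Etil :: "real \<Rightarrow> seed \<Rightarrow> real" where
  "Etil g s = (case s of (v, TI) \<Rightarrow> -4 * (g + real v + 1/2)
      | (v, TII) \<Rightarrow> -4 * (g - real v - 1/2))"

definition zetatil :: "real \<Rightarrow> seed \<Rightarrow> real \<Rightarrow> real" where
  "zetatil g s \<eta> = (case s of (v, TI) \<Rightarrow> 2 * \<eta> * lag (g + 1/2) (int v) (- \<eta>)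
      | (v, TII) \<Rightarrow> -2 * (g - 1/2 - real v) * lag (-g - 1/2) (int v) \<eta>)"

definition En :: "nat \<Rightarrow> real" where "En n = 4 * real n"

definition zetan :: "real \<Rightarrow> nat \<Rightarrow> real \<Rightarrow> real" where
  "zetan g n \<eta> = -2 * \<eta> * lag (g + 1/2) (int n - 1) \<eta>"

text \<open>Matrix (a_{j,k}), 0-based: row i corresponds to j = i+1. Odd j = 2l-1 (even i, l-1 = i div 2)
  gives xi-type entries, even j = 2l (odd i, l-1 = i div 2) gives zeta-type entries.\<close>
definition amat :: "real \<Rightarrow> seed list \<Rightarrow> nat \<Rightarrow> real \<Rightarrow> nat \<Rightarrow> nat \<Rightarrow> real" where
  "amat g D n \<eta> i k = (if k < length D then
       (- Etil g (D ! k)) ^ (i div 2) * (if even i then xi g (D ! k) \<eta> else zetatil g (D ! k) \<eta>)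
     else
       (- En n) ^ (i div 2) * (if even i then lag (g - 1/2) (int n) \<eta> else zetan g n \<eta>))"

definition bmat :: "real \<Rightarrow> seed list \<Rightarrow> real \<Rightarrow> nat \<Rightarrow> nat \<Rightarrow> real" where
  "bmat g D \<eta> i k =
       (- Etil g (D ! k)) ^ (i div 2) * (if even i then xi g (D ! k) \<eta> else zetatil g (D ! k) \<eta>)"

end

theory Submission
  imports Defs "Jordan_Normal_Form.Determinant" "HOL-Computational_Algebra.Polynomial"
begin

text \<open>
  Every seed function \<open>mu g s\<close> and every \<open>Pn g n\<close> solves a Laguerre equation
  \<open>\<eta> y'' + (g + 1/2 - \<eta>) y' + e y = 0\<close>, with \<open>e = Etil g s / 4\<close> resp. \<open>e = n\<close>; this is where the
  contiguous relations of the Laguerre polynomials enter. Iterating the equation, the \<open>j\<close>-th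
  derivative of any solution is \<open>\<Sum>s\<le>j. T j s \<eta> * e ^ (s div 2) * (if even s then y else y')\<close>
  with coefficients \<open>T\<close> that do not depend on the solution and form a lower triangular matrix.
  So the Wronskian is \<open>\<Prod>j. T j j\<close> times the determinant with entries
  \<open>e\<^sub>k ^ (j div 2) * (if even j then y\<^sub>k else y\<^sub>k')\<close>. Writing \<open>y\<^sub>k = c\<^sub>k * xi\<close> and
  \<open>y\<^sub>k' = c\<^sub>k * zeta / (2 \<eta>)\<close>, with the gauge factor \<open>c\<^sub>k = exp \<eta>\<close> or \<open>\<eta> powr (1/2 - g)\<close>,
  turns this determinant into \<open>amat\<close> resp. \<open>bmat\<close>, and the leftover powers of \<open>\<eta>\<close> add up
  to the stated exponents. The identities hold for every list of seed labels.
\<close>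

section \<open>Laguerre polynomials\<close>

definition laguerre_coeff :: "real \<Rightarrow> int \<Rightarrow> nat \<Rightarrow> real" where
  "laguerre_coeff a m k =
     (if int k \<le> m then (-1)^k * ((a + of_int m) gchoose (nat m - k)) / fact k else 0)"

definition laguerre_poly :: "real \<Rightarrow> int \<Rightarrow> real poly" where
  "laguerre_poly a m = (\<Sum>k\<le>nat m. monom (laguerre_coeff a m k) k)"

lemma coeff_laguerre_poly: "coeff (laguerre_poly a m) i = laguerre_coeff a m i"
  unfolding laguerre_poly_def by (auto simp: coeff_sum laguerre_coeff_def)

lemma laguerre_coeff_neg: "m < 0 \<Longrightarrow> laguerre_coeff a m i = 0"
  by (simp add: laguerre_coeff_def)

lemma laguerre_coeff_of_nat:
  "laguerre_coeff a (int n) i = (if i \<le> n then (-1)^i * ((a + real n) gchoose (n - i)) / fact i else 0)"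
  by (simp add: laguerre_coeff_def)

lemma laguerre_coeff_of_nat_minus_1:
  "laguerre_coeff a (int n - 1) i =
     (if i < n then (-1)^i * ((a + real n - 1) gchoose (n - 1 - i)) / fact i else 0)"
  by (auto simp: laguerre_coeff_def nat_diff_distrib add_diff_eq)

lemma pochhammer_minus_of_nat:
  assumes "k \<le> m"
  shows "pochhammer (- real m) k = (-1)^k * fact k * real (m choose k)"
proof -
  have "pochhammer (- real m) k = (-1)^k * pochhammer (real m - of_nat k + 1) k"
    by (rule pochhammer_minus)
  also have "pochhammer (real m - of_nat k + 1) k = (real m gchoose k) * fact k"
    by (simp add: gbinomial_pochhammer')
  finally show ?thesis by (simp add: binomial_gbinomial)
qed

lemma lag_term_eq_laguerre_coeff:
  assumes "k \<le> m"
  shows "1 / fact m * (pochhammer (- real m) k / fact k * pochhammer (a + real k + 1) (m - k) * y ^ k)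
    = laguerre_coeff a (int m) k * y ^ k"
proof -
  have g: "(a + real m) gchoose (m - k) = pochhammer (a + real k + 1) (m - k) / fact (m - k)"
    using assms by (simp add: gbinomial_pochhammer' of_nat_diff)
  have b: "real (m choose k) = fact m / (fact k * fact (m - k))"
    using assms by (simp add: binomial_fact)
  show ?thesis
    unfolding laguerre_coeff_of_nat g pochhammer_minus_of_nat[OF assms] b
    using assms by (simp add: field_simps)
qed

lemma lag_eq_poly_laguerre: "lag a m y = poly (laguerre_poly a m) y"
proof (cases "m < 0")
  case True
  then show ?thesis by (simp add: lag_def laguerre_poly_def laguerre_coeff_def)
next
  case False
  then obtain n where n: "m = int n" by (metis nonneg_int_cases not_less)
  have "lag a m y = (\<Sum>k=0..n. 1 / fact n * (pochhammer (- real n) k / fact k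
                        * pochhammer (a + real k + 1) (n - k) * y ^ k))"
    by (simp add: lag_def n sum_distrib_left)
  also have "\<dots> = (\<Sum>k=0..n. laguerre_coeff a m k * y^k)"
    by (rule sum.cong[OF refl], subst lag_term_eq_laguerre_coeff) (auto simp: n)
  finally show ?thesis
    by (simp add: laguerre_poly_def poly_sum poly_monom n atLeast0AtMost)
qed

lemma pderiv_laguerre_poly: "pderiv (laguerre_poly a m) = - laguerre_poly (a + 1) (m - 1)"
proof (rule poly_eqI)
  fix i
  show "coeff (pderiv (laguerre_poly a m)) i = coeff (- laguerre_poly (a + 1) (m - 1)) i"
  proof (cases "m < 0")
    case True
    then show ?thesis by (simp add: coeff_pderiv coeff_laguerre_poly laguerre_coeff_neg)
  next
    case False
    then obtain n where n: "m = int n" by (metis nonneg_int_cases not_less)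
    have "real (Suc i) * ((-1)^Suc i * ((a + real n) gchoose (n - Suc i)) / fact (Suc i))
        = - ((-1)^i * ((a + 1 + real n - 1) gchoose (n - 1 - i)) / fact i)"
      by (simp add: fact_Suc divide_divide_eq_left mult.commute)
    then show ?thesis
      by (simp add: coeff_pderiv coeff_laguerre_poly laguerre_coeff_of_nat
          laguerre_coeff_of_nat_minus_1 n)
  qed
qed

lemma laguerre_poly_param_Suc:
  "laguerre_poly (a + 1) m = laguerre_poly a m + laguerre_poly (a + 1) (m - 1)"
proof (rule poly_eqI)
  fix i
  show "coeff (laguerre_poly (a + 1) m) i = coeff (laguerre_poly a m + laguerre_poly (a + 1) (m - 1)) i"
  proof (cases "m < 0")
    case True
    then show ?thesis by (simp add: coeff_laguerre_poly laguerre_coeff_neg)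
  next
    case False
    then obtain n where n: "m = int n" by (metis nonneg_int_cases not_less)
    show ?thesis
    proof (cases "i < n")
      case True
      then obtain t where t: "n - i = Suc t" "n - 1 - i = t"
        by (metis Suc_diff_Suc diff_Suc_1 diff_commute less_imp_Suc_add add_diff_cancel_left')
      have "(a + 1 + real n) gchoose Suc t = ((a + real n) gchoose t) + ((a + real n) gchoose Suc t)"
        using gbinomial_Suc_Suc[of "a + real n" t] by (simp add: add_ac)
      then show ?thesis
        using True t by (simp add: coeff_laguerre_poly laguerre_coeff_of_nat
            laguerre_coeff_of_nat_minus_1 n add_divide_distrib algebra_simps)
    next
      case False
      then show ?thesis
        by (auto simp: coeff_laguerre_poly laguerre_coeff_of_nat laguerre_coeff_of_nat_minus_1 n)
    qed
  qed
qed

lemma laguerre_poly_degree_pred: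
  "Polynomial.smult (of_int m) (laguerre_poly a m)
     = Polynomial.smult (a + of_int m) (laguerre_poly a (m - 1)) - pCons 0 (laguerre_poly (a + 1) (m - 1))"
proof (rule poly_eqI)
  fix i
  let ?c = "\<lambda>p. coeff p i"
  show "?c (Polynomial.smult (of_int m) (laguerre_poly a m))
     = ?c (Polynomial.smult (a + of_int m) (laguerre_poly a (m - 1)) - pCons 0 (laguerre_poly (a + 1) (m - 1)))"
  proof (cases "m < 0")
    case True
    then show ?thesis
      by (cases i) (simp_all add: coeff_laguerre_poly laguerre_coeff_neg coeff_pCons)
  next
    case False
    then obtain n where n: "m = int n" by (metis nonneg_int_cases not_less)
    consider "n < i" | "i = n" | "i < n" by linarith
    then show ?thesis
    proof cases
      case 1
      then show ?thesis
        by (cases i) (auto simp: coeff_laguerre_poly laguerre_coeff_of_nat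
            laguerre_coeff_of_nat_minus_1 n coeff_pCons)
    next
      case 2
      have top: "?c (laguerre_poly a m) = (-1)^n / fact n" "?c (laguerre_poly a (m - 1)) = 0"
        using 2 by (simp_all add: coeff_laguerre_poly laguerre_coeff_of_nat
            laguerre_coeff_of_nat_minus_1 n)
      show ?thesis
      proof (cases n)
        case (Suc k)
        have "?c (pCons 0 (laguerre_poly (a + 1) (m - 1))) = (-1)^k / fact k"
          using 2 Suc by (simp add: coeff_laguerre_poly laguerre_coeff_of_nat_minus_1 laguerre_coeff_of_nat n)
        then show ?thesis
          unfolding coeff_diff coeff_smult top by (simp add: n Suc fact_Suc)
      qed (use 2 in \<open>simp add: coeff_laguerre_poly laguerre_coeff_neg n\<close>)
    next
      case 3
      define G where "G = (a + real n) gchoose (n - i)"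
      define H where "H = (a + real n - 1) gchoose (n - 1 - i)"
      define s :: real where "s = (-1)^i / fact i"
      have absorb: "real (n - i) * G = (a + real n) * H"
        using gbinomial_absorption[of "n - 1 - i" "a + real n"] 3
        unfolding G_def H_def by (simp add: Suc_diff_Suc add_ac)
      have c: "?c (laguerre_poly a m) = s * G" "?c (laguerre_poly a (m - 1)) = s * H"
        using 3 by (simp_all add: coeff_laguerre_poly laguerre_coeff_of_nat
            laguerre_coeff_of_nat_minus_1 n s_def G_def H_def)
      have "?c (pCons 0 (laguerre_poly (a + 1) (m - 1))) = - real i * (s * G)"
      proof (cases i)
        case (Suc k)
        have "?c (pCons 0 (laguerre_poly (a + 1) (m - 1))) = (-1)^k / fact k * G"
          using 3 Suc by (simp add: coeff_laguerre_poly laguerre_coeff_of_nat_minus_1 n G_def)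
        also have "\<dots> = - real (Suc k) * ((-1)^(Suc k) / fact (Suc k) * G)"
          by (simp del: of_nat_Suc)
        finally show ?thesis unfolding s_def Suc .
      qed simp
      moreover have "real n * (s * G) = s * (real (n - i) * G) + real i * (s * G)"
        using 3 by (simp add: of_nat_diff algebra_simps)
      ultimately show ?thesis
        unfolding coeff_diff coeff_smult c absorb by (simp add: n algebra_simps)
    qed
  qed
qed

lemma has_real_derivative_lag:
  "b = a + 1 \<Longrightarrow> ((\<lambda>y. lag a m y) has_real_derivative - lag b (m - 1) y) (at y)"
  using poly_DERIV[of "laguerre_poly a m" y]
  by (simp add: lag_eq_poly_laguerre pderiv_laguerre_poly)

lemma has_real_derivative_lag_uminus:
  "b = a + 1 \<Longrightarrow> ((\<lambda>y. lag a m (- y)) has_real_derivative lag b (m - 1) (- y)) (at y)"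
  using DERIV_chain2[OF has_real_derivative_lag[of b a m "- y"] DERIV_minus[OF DERIV_ident]]
  by simp

lemma lag_param_Suc: "b = a + 1 \<Longrightarrow> lag b m y = lag a m y + lag b (m - 1) y"
  using arg_cong[OF laguerre_poly_param_Suc[of a m], of "\<lambda>p. poly p y"]
  by (simp add: lag_eq_poly_laguerre)

lemma lag_degree_pred:
  "b = a + 1 \<Longrightarrow> of_int m * lag a m y = (a + of_int m) * lag a (m - 1) y - y * lag b (m - 1) y"
  using arg_cong[OF laguerre_poly_degree_pred[of m a], of "\<lambda>p. poly p y"]
  by (simp add: lag_eq_poly_laguerre)

lemma lag_param_pred:
  assumes "b = a + 1" "c = a - 1"
  shows "a * lag a m y - y * lag b (m - 1) y = (a + of_int m) * lag c m y"
proof -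
  have "a * lag a m y - y * lag b (m - 1) y = (a + of_int m) * (lag a m y - lag a (m - 1) y)"
    using lag_degree_pred[OF assms(1), of m y] by (simp add: algebra_simps)
  also have "lag a m y - lag a (m - 1) y = lag c m y"
    using lag_param_Suc[of a c m y] assms by simp
  finally show ?thesis .
qed

section \<open>Higher derivatives of solutions of the Laguerre equation\<close>

definition ode_basis :: "real \<Rightarrow> (real \<Rightarrow> real) \<Rightarrow> (real \<Rightarrow> real) \<Rightarrow> nat \<Rightarrow> real \<Rightarrow> real" where
  "ode_basis e f df s x = e^(s div 2) * (if even s then f x else df x)"

text \<open>
  \<open>deriv_coeff \<alpha> j s\<close> is the coefficient \<open>T j s\<close> of \<open>B s = ode_basis e f df s\<close> in the
  \<open>j\<close>-th derivative. Its recurrence is what differentiating \<open>\<Sum>s. T j s * B s\<close> produces,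
  using \<open>B (2i)' = B (2i+1)\<close> and \<open>x * B (2i+1)' = (x - \<alpha> - 1) * B (2i+1) - B (2i+2)\<close>.
\<close>

primrec deriv_coeff_poly :: "real \<Rightarrow> nat \<Rightarrow> nat \<Rightarrow> real poly" where
  "deriv_coeff_poly \<alpha> 0 s = (if s = 0 then 1 else 0)"
| "deriv_coeff_poly \<alpha> (Suc j) s =
     pCons 0 (pderiv (deriv_coeff_poly \<alpha> j s)) - Polynomial.smult (of_nat j) (deriv_coeff_poly \<alpha> j s)
     + (if s = 0 then 0 else if even s then - deriv_coeff_poly \<alpha> j (s - 1)
        else pCons 0 (deriv_coeff_poly \<alpha> j (s - 1)))
     + (if odd s then [:- \<alpha> - 1, 1:] * deriv_coeff_poly \<alpha> j s else 0)"

definition deriv_coeff :: "real \<Rightarrow> nat \<Rightarrow> nat \<Rightarrow> real \<Rightarrow> real" where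
  "deriv_coeff \<alpha> j s x = poly (deriv_coeff_poly \<alpha> j s) x / x^j"

definition deriv_expansion ::
  "real \<Rightarrow> real \<Rightarrow> (real \<Rightarrow> real) \<Rightarrow> (real \<Rightarrow> real) \<Rightarrow> nat \<Rightarrow> real \<Rightarrow> real" where
  "deriv_expansion \<alpha> e f df j x = (\<Sum>s\<le>j. deriv_coeff \<alpha> j s x * ode_basis e f df s x)"

lemma deriv_coeff_poly_eq_0: "j < s \<Longrightarrow> deriv_coeff_poly \<alpha> j s = 0"
  by (induction j arbitrary: s) auto

lemma deriv_coeff_eq_0: "j < s \<Longrightarrow> deriv_coeff \<alpha> j s x = 0"
  by (simp add: deriv_coeff_def deriv_coeff_poly_eq_0)

lemma poly_deriv_coeff_poly_diag:
  "poly (deriv_coeff_poly \<alpha> j j) x = (-1)^(j div 2) * x^((j + 1) div 2)"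
proof (induction j)
  case (Suc j)
  have "deriv_coeff_poly \<alpha> j (Suc j) = 0" by (simp add: deriv_coeff_poly_eq_0)
  moreover have "even j \<Longrightarrow> Suc j div 2 = j div 2 \<and> (Suc j + 1) div 2 = Suc ((j + 1) div 2)"
    and "odd j \<Longrightarrow> Suc j div 2 = Suc (j div 2) \<and> (Suc j + 1) div 2 = (j + 1) div 2"
    by presburger+
  ultimately show ?case using Suc by (cases "even j") simp_all
qed simp

lemma deriv_coeff_diag_scaled:
  assumes "x > 0"
  shows "deriv_coeff \<alpha> j j x * ((-1/4)^(j div 2) * (if even j then 1 else 1 / (2 * x)))
    = (1/2)^j / x^((j + 1) div 2)"
proof -
  have sign: "(-1::real)^i * (-1/4)^i = (1/4)^i" for i :: nat
    by (simp flip: power_mult_distrib)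
  have quarter: "(1/2::real)^(2*i) = (1/4)^i" for i :: nat
    by (simp add: power_mult power2_eq_square)
  have square: "x^(2*i) = x^i * x^i" for i :: nat
    by (simp add: mult_2 power_add)
  obtain i where "j = 2 * i \<or> j = 2 * i + 1" by (metis oddE evenE)
  then show ?thesis
  proof
    assume j: "j = 2 * i"
    have "deriv_coeff \<alpha> j j x * ((-1/4)^(j div 2) * (if even j then 1 else 1 / (2 * x)))
        = ((-1)^i * (-1/4)^i) / x^i"
      unfolding deriv_coeff_def poly_deriv_coeff_poly_diag j square using assms by simp
    then show ?thesis unfolding sign j quarter by simp
  next
    assume j: "j = 2 * i + 1"
    have "deriv_coeff \<alpha> j j x * ((-1/4)^(j div 2) * (if even j then 1 else 1 / (2 * x)))
        = ((-1)^i * (-1/4)^i) * (1/2) / x^(i + 1)"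
    proof -
      have "x^(2 * i + 1) = x^i * x^i * x" "x^(i + 1) = x^i * x"
        by (simp_all add: square)
      then show ?thesis
        unfolding deriv_coeff_def poly_deriv_coeff_poly_diag j using assms by (simp add: field_simps)
    qed
    then show ?thesis unfolding sign j power_add quarter by simp
  qed
qed

lemma has_real_derivative_deriv_coeff:
  assumes "x > 0"
  shows "(deriv_coeff \<alpha> j s has_real_derivative
     poly (pCons 0 (pderiv (deriv_coeff_poly \<alpha> j s)) - Polynomial.smult (of_nat j) (deriv_coeff_poly \<alpha> j s)) x
       / x^Suc j) (at x)"
proof -
  let ?Q = "deriv_coeff_poly \<alpha> j s"
  have "((\<lambda>x. poly ?Q x / x^j) has_real_derivative
     (poly (pderiv ?Q) x * x^j - poly ?Q x * (real j * x^(j - 1))) / (x^j * x^j)) (at x)"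
    using assms by (intro DERIV_divide poly_DERIV DERIV_pow) auto
  moreover have "(poly (pderiv ?Q) x * x^j - poly ?Q x * (real j * x^(j - 1))) / (x^j * x^j)
     = poly (pCons 0 (pderiv ?Q) - Polynomial.smult (of_nat j) ?Q) x / x^Suc j"
    using assms by (cases j) (simp_all add: field_simps)
  ultimately show ?thesis by (simp add: deriv_coeff_def[abs_def])
qed

lemma deriv_coeff_Suc:
  assumes "x \<noteq> 0"
  shows "deriv_coeff \<alpha> (Suc j) s x =
     poly (pCons 0 (pderiv (deriv_coeff_poly \<alpha> j s)) - Polynomial.smult (of_nat j) (deriv_coeff_poly \<alpha> j s)) x
       / x^Suc j
     + (if odd s then (x - \<alpha> - 1) / x * deriv_coeff \<alpha> j s x else 0)
     + (if s = 0 then 0 else if even s then - deriv_coeff \<alpha> j (s - 1) x / x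
        else deriv_coeff \<alpha> j (s - 1) x)"
  using assms by (auto simp: deriv_coeff_def field_simps)

text \<open>\<open>f\<close> solves \<open>x f'' + (\<alpha> + 1 - x) f' + e f = 0\<close> on \<open>x > 0\<close>, and \<open>df = f'\<close> there.\<close>

locale laguerre_ode =
  fixes \<alpha> e :: real and f df :: "real \<Rightarrow> real"
  assumes has_deriv: "x > 0 \<Longrightarrow> (f has_real_derivative df x) (at x)"
    and has_deriv_deriv: "x > 0 \<Longrightarrow> (df has_real_derivative ((x - \<alpha> - 1) * df x - e * f x) / x) (at x)"
begin

lemma has_real_derivative_ode_basis:
  assumes "x > 0"
  shows "(ode_basis e f df s has_real_derivative
    (if even s then ode_basis e f df (Suc s) x
     else (x - \<alpha> - 1) / x * ode_basis e f df s x - ode_basis e f df (Suc s) x / x)) (at x)"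
proof (cases "even s")
  case True
  then have "Suc s div 2 = s div 2" by presburger
  then show ?thesis
    using True DERIV_cmult[OF has_deriv[OF assms], of "e^(s div 2)"]
    by (simp add: ode_basis_def[abs_def])
next
  case False
  then have "Suc s div 2 = Suc (s div 2)" by presburger
  then have "(x - \<alpha> - 1) / x * ode_basis e f df s x - ode_basis e f df (Suc s) x / x
     = e^(s div 2) * (((x - \<alpha> - 1) * df x - e * f x) / x)"
    using False assms by (simp add: ode_basis_def field_simps)
  then show ?thesis
    using False DERIV_cmult[OF has_deriv_deriv[OF assms], of "e^(s div 2)"]
    by (simp add: ode_basis_def[abs_def])
qed

lemma has_real_derivative_deriv_expansion:
  assumes x: "x > 0"
  shows "(deriv_expansion \<alpha> e f df j has_real_derivative deriv_expansion \<alpha> e f df (Suc j) x) (at x)"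
proof -
  define B where "B s = ode_basis e f df s x" for s
  define T where "T s = deriv_coeff \<alpha> j s x" for s
  define D where "D s = poly (pCons 0 (pderiv (deriv_coeff_poly \<alpha> j s))
                         - Polynomial.smult (of_nat j) (deriv_coeff_poly \<alpha> j s)) x / x^Suc j" for s
  define P where "P s = (if odd s then (x - \<alpha> - 1) / x * T s else 0)" for s
  define R where "R s = (if s = 0 then 0 else if even s then - T (s - 1) / x else T (s - 1))" for s
  have deriv: "(deriv_expansion \<alpha> e f df j has_real_derivative
     (\<Sum>s\<le>j. T s * (if even s then B (Suc s) else (x - \<alpha> - 1) / x * B s - B (Suc s) / x) + D s * B s))
     (at x)"
    unfolding deriv_expansion_def[abs_def] T_def B_def D_def
    by (intro DERIV_sum DERIV_mult' has_real_derivative_deriv_coeff has_real_derivative_ode_basis x)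
  have "deriv_expansion \<alpha> e f df (Suc j) x
      = (\<Sum>s\<le>Suc j. (D s + P s) * B s) + (\<Sum>s\<le>Suc j. R s * B s)"
    unfolding deriv_expansion_def deriv_coeff_Suc[OF less_imp_neq[OF x, symmetric]] sum.distrib[symmetric]
    by (rule sum.cong) (simp_all add: B_def T_def D_def P_def R_def algebra_simps)
  also have "(\<Sum>s\<le>Suc j. (D s + P s) * B s) = (\<Sum>s\<le>j. (D s + P s) * B s)"
    by (simp add: D_def P_def T_def deriv_coeff_poly_eq_0 deriv_coeff_eq_0)
  also have "(\<Sum>s\<le>Suc j. R s * B s) = (\<Sum>s\<le>j. (if odd s then - T s / x else T s) * B (Suc s))"
    unfolding sum.atMost_Suc_shift by (auto simp: R_def intro!: sum.cong)
  also have "(\<Sum>s\<le>j. (D s + P s) * B s) + \<dots>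
      = (\<Sum>s\<le>j. T s * (if even s then B (Suc s) else (x - \<alpha> - 1) / x * B s - B (Suc s) / x)
                    + D s * B s)"
    unfolding sum.distrib[symmetric] by (rule sum.cong) (auto simp: P_def algebra_simps)
  finally show ?thesis using deriv by simp
qed

lemma higher_deriv_eq_deriv_expansion: "x > 0 \<Longrightarrow> (deriv ^^ j) f x = deriv_expansion \<alpha> e f df j x"
proof (induction j arbitrary: x)
  case 0
  then show ?case by (simp add: deriv_expansion_def deriv_coeff_def ode_basis_def)
next
  case (Suc j)
  have "eventually (\<lambda>y. y \<in> {0<..}) (nhds x)"
    using Suc.prems by (intro eventually_nhds_in_open) auto
  then have "eventually (\<lambda>y. (deriv ^^ j) f y = deriv_expansion \<alpha> e f df j y) (nhds x)"
    by eventually_elim (use Suc.IH in auto)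
  then have "(deriv ^^ Suc j) f x = deriv (deriv_expansion \<alpha> e f df j) x"
    by (simp add: deriv_cong_ev)
  also have "\<dots> = deriv_expansion \<alpha> e f df (Suc j) x"
    by (rule DERIV_imp_deriv[OF has_real_derivative_deriv_expansion[OF Suc.prems]])
  finally show ?case .
qed

end

section \<open>Determinants and Wronskians\<close>

lemma detm_cong:
  "(\<And>i j. i < N \<Longrightarrow> j < N \<Longrightarrow> A i j = A' i j) \<Longrightarrow> detm N A = detm N A'"
  unfolding detm_def
  by (intro sum.cong refl arg_cong2[where f="(*)"] prod.cong) (auto dest: permutes_in_image)

lemma detm_eq_det: "detm N A = Determinant.det (Matrix.mat N N (\<lambda>(i, j). A i j))"
  unfolding detm_def Determinant.det_def by (simp add: atLeast0LessThan)

lemma detm_lower_triangular_mult: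
  assumes "\<And>j s. j < s \<Longrightarrow> s < N \<Longrightarrow> T j s = 0"
  shows "detm N (\<lambda>j k. \<Sum>s<N. T j s * B s k) = (\<Prod>j<N. T j j) * detm N B"
proof -
  let ?T = "Matrix.mat N N (\<lambda>(i, j). T i j)" and ?B = "Matrix.mat N N (\<lambda>(i, j). B i j)"
  have product: "Matrix.mat N N (\<lambda>(j, k). \<Sum>s<N. T j s * B s k) = ?T * ?B"
    by (rule eq_matI) (auto simp: scalar_prod_def atLeast0LessThan intro!: sum.cong)
  have "prod_list (diag_mat ?T) = (\<Prod>j<N. T j j)"
    using prod.distinct_set_conv_list[of "[0..<N]" "\<lambda>i. ?T $$ (i, i)"]
    by (simp add: diag_mat_def atLeast0LessThan[symmetric])
  then have "Determinant.det ?T = (\<Prod>j<N. T j j)"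
    by (subst det_lower_triangular[of N]) (auto simp: assms)
  then show ?thesis
    unfolding detm_eq_det product by (subst det_mult[of _ N]) auto
qed

lemma detm_scale_rows_cols:
  "detm N (\<lambda>i j. r i * A i j * c j) = (\<Prod>i<N. r i) * (\<Prod>j<N. c j) * detm N A"
proof -
  have "(\<Prod>i<N. r i * A i (p i) * c (p i)) = (\<Prod>i<N. r i) * (\<Prod>j<N. c j) * (\<Prod>i<N. A i (p i))"
    if "p permutes {..<N}" for p
    using prod.permute[OF that, of c] by (simp add: prod.distrib comp_def)
  then show ?thesis
    unfolding detm_def by (simp add: sum_distrib_left algebra_simps)
qed

lemma prod_half_power_div_power:
  assumes x: "x > 0"
  shows "(\<Prod>j<N. (1/2::real)^j / x^((j + 1) div 2))
    = 2 powr (- (real N * (real N - 1) / 2)) * x powr (- real (N * N div 4))"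
proof (induction N)
  case (Suc N)
  have square: "Suc N * Suc N div 4 = N * N div 4 + (N + 1) div 2"
  proof -
    obtain t where "N = 2 * t \<or> N = 2 * t + 1" by (metis oddE evenE)
    then show ?thesis
    proof
      assume N: "N = 2 * t"
      have "Suc N * Suc N = 4 * (t * t + t) + 1" "N * N = 4 * (t * t)"
        unfolding N by (simp_all add: algebra_simps)
      then show ?thesis unfolding N by simp
    next
      assume N: "N = 2 * t + 1"
      have "Suc N * Suc N = 4 * ((t + 1) * (t + 1))" "N * N = 4 * (t * t + t) + 1"
        unfolding N by (simp_all add: algebra_simps)
      then show ?thesis unfolding N by (simp add: algebra_simps)
    qed
  qed
  have half: "(1/2::real)^N = 2 powr (- real N)"
    by (simp add: powr_minus powr_realpow power_one_over inverse_eq_divide)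
  have inv: "1 / x^((N + 1) div 2) = x powr (- real ((N + 1) div 2))"
    using x by (simp add: powr_minus powr_realpow divide_inverse)
  have "(\<Prod>j<Suc N. (1/2::real)^j / x^((j + 1) div 2))
      = (\<Prod>j<N. (1/2::real)^j / x^((j + 1) div 2)) * ((1/2)^N * (1 / x^((N + 1) div 2)))"
    by simp
  also have "\<dots> = (2 powr (- (real N * (real N - 1) / 2)) * 2 powr (- real N))
        * (x powr (- real (N * N div 4)) * x powr (- real ((N + 1) div 2)))"
    unfolding Suc.IH half inv by (simp add: algebra_simps)
  also have "\<dots> = 2 powr (- (real N * (real N - 1) / 2) + - real N)
        * x powr (- real (N * N div 4) + - real ((N + 1) div 2))"
    by (simp only: powr_add)
  also have "- (real N * (real N - 1) / 2) + - real N = - (real (Suc N) * (real (Suc N) - 1) / 2)"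
    by (simp add: algebra_simps)
  finally show ?case unfolding square by simp
qed (use x in simp)

lemma detm_higher_derivs_laguerre_ode:
  fixes f df :: "nat \<Rightarrow> real \<Rightarrow> real" and e c u v :: "nat \<Rightarrow> real"
  assumes x: "x > 0"
    and ode: "\<And>k. k < N \<Longrightarrow> laguerre_ode \<alpha> (e k) (f k) (df k)"
    and f: "\<And>k. k < N \<Longrightarrow> f k x = c k * u k"
    and df: "\<And>k. k < N \<Longrightarrow> df k x = c k * v k / (2 * x)"
  shows "detm N (\<lambda>j k. (deriv ^^ j) (f k) x)
    = 2 powr (- (real N * (real N - 1) / 2)) * x powr (- real (N * N div 4)) * (\<Prod>k<N. c k)
      * detm N (\<lambda>j k. (-4 * e k)^(j div 2) * (if even j then u k else v k))"
proof -
  define r where "r s = (-1/4::real)^(s div 2) * (if even s then 1 else 1 / (2 * x))" for s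
  define A where "A j k = (-4 * e k)^(j div 2) * (if even j then u k else v k)" for j k
  have "detm N (\<lambda>j k. (deriv ^^ j) (f k) x)
      = detm N (\<lambda>j k. \<Sum>s<N. deriv_coeff \<alpha> j s x * ode_basis (e k) (f k) (df k) s x)"
  proof (rule detm_cong)
    fix j k assume "j < N" "k < N"
    have "(deriv ^^ j) (f k) x = deriv_expansion \<alpha> (e k) (f k) (df k) j x"
      using laguerre_ode.higher_deriv_eq_deriv_expansion[OF ode[OF \<open>k < N\<close>] x] .
    also have "\<dots> = (\<Sum>s<N. deriv_coeff \<alpha> j s x * ode_basis (e k) (f k) (df k) s x)"
      unfolding deriv_expansion_def using \<open>j < N\<close>
      by (intro sum.mono_neutral_left) (auto simp: deriv_coeff_eq_0)
    finally show "(deriv ^^ j) (f k) x = \<dots>" .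
  qed
  also have "\<dots> = (\<Prod>j<N. deriv_coeff \<alpha> j j x) * detm N (\<lambda>s k. ode_basis (e k) (f k) (df k) s x)"
    by (rule detm_lower_triangular_mult) (simp add: deriv_coeff_eq_0)
  also have "detm N (\<lambda>s k. ode_basis (e k) (f k) (df k) s x) = detm N (\<lambda>s k. r s * A s k * c k)"
  proof (rule detm_cong)
    fix s k assume "s < N" "k < N"
    have "ode_basis (e k) (f k) (df k) s x
        = e k ^ (s div 2) * ((if even s then 1 else 1 / (2 * x)) * (if even s then u k else v k) * c k)"
      using f[OF \<open>k < N\<close>] df[OF \<open>k < N\<close>] by (cases "even s") (simp_all add: ode_basis_def)
    also have "e k ^ (s div 2) = (-1/4::real)^(s div 2) * (-4 * e k)^(s div 2)"
      by (simp flip: power_mult_distrib)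
    finally show "ode_basis (e k) (f k) (df k) s x = r s * A s k * c k"
      unfolding r_def A_def by (simp only: mult_ac)
  qed
  also have "\<dots> = (\<Prod>s<N. r s) * (\<Prod>k<N. c k) * detm N A"
    by (rule detm_scale_rows_cols)
  finally have "detm N (\<lambda>j k. (deriv ^^ j) (f k) x)
      = (\<Prod>j<N. deriv_coeff \<alpha> j j x * r j) * (\<Prod>k<N. c k) * detm N A"
    by (simp only: prod.distrib mult_ac)
  also have "(\<Prod>j<N. deriv_coeff \<alpha> j j x * r j) = (\<Prod>j<N. (1/2)^j / x^((j + 1) div 2))"
    unfolding r_def by (rule prod.cong[OF refl]) (rule deriv_coeff_diag_scaled[OF x])
  finally show ?thesis
    unfolding prod_half_power_div_power[OF x] A_def .
qed

section \<open>The seed functions and the eigenfunctions\<close>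

definition seed_gauge :: "real \<Rightarrow> seed \<Rightarrow> real \<Rightarrow> real" where
  "seed_gauge g s x = (case s of (v, TI) \<Rightarrow> exp x | (v, TII) \<Rightarrow> x powr (1/2 - g))"

definition mu_deriv :: "real \<Rightarrow> seed \<Rightarrow> real \<Rightarrow> real" where
  "mu_deriv g s = (case s of
       (v, TI) \<Rightarrow> (\<lambda>y. exp y * lag (g + 1/2) (int v) (- y))
     | (v, TII) \<Rightarrow> (\<lambda>y. (real v + 1/2 - g) * (y powr (- g - 1/2) * lag (- g - 1/2) (int v) y)))"

lemma laguerre_ode_mu_TI:
  "laguerre_ode (g - 1/2) (Etil g (v, TI) / 4) (mu g (v, TI)) (mu_deriv g (v, TI))"
proof
  fix x :: real assume x: "x > 0"
  have "((\<lambda>y. exp y * lag (g - 1/2) (int v) (- y)) has_real_derivative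
      exp x * lag (g + 1/2) (int v - 1) (- x) + exp x * lag (g - 1/2) (int v) (- x)) (at x)"
    by (intro DERIV_mult' DERIV_exp has_real_derivative_lag_uminus) simp
  then show "(mu g (v, TI) has_real_derivative mu_deriv g (v, TI) x) (at x)"
    using lag_param_Suc[of "g + 1/2" "g - 1/2" "int v" "- x"]
    by (simp add: mu_def[abs_def] mu_deriv_def algebra_simps)
next
  fix x :: real assume x: "x > 0"
  let ?L0 = "lag (g - 1/2) (int v) (- x)" and ?L1 = "lag (g + 1/2) (int v) (- x)"
    and ?L2 = "lag (g + 3/2) (int v - 1) (- x)"
  have "((\<lambda>y. exp y * lag (g + 1/2) (int v) (- y)) has_real_derivative
      exp x * ?L2 + exp x * ?L1) (at x)"
    by (intro DERIV_mult' DERIV_exp has_real_derivative_lag_uminus) simp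
  moreover have "exp x * ?L2 + exp x * ?L1
      = ((x - (g - 1/2) - 1) * mu_deriv g (v, TI) x - Etil g (v, TI) / 4 * mu g (v, TI) x) / x"
  proof -
    have relation: "(g + 1/2) * ?L1 + x * ?L2 = (g + 1/2 + real v) * ?L0"
      using lag_param_pred[of "g + 3/2" "g + 1/2" "g - 1/2" "int v" "- x"] by simp
    have "(x - (g - 1/2) - 1) * mu_deriv g (v, TI) x - Etil g (v, TI) / 4 * mu g (v, TI) x
        - x * (exp x * ?L2 + exp x * ?L1)
        = exp x * ((g + 1/2 + real v) * ?L0 - ((g + 1/2) * ?L1 + x * ?L2))"
      by (simp add: mu_def mu_deriv_def Etil_def field_simps)
    then have "(x - (g - 1/2) - 1) * mu_deriv g (v, TI) x - Etil g (v, TI) / 4 * mu g (v, TI) x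
        = (exp x * ?L2 + exp x * ?L1) * x"
      unfolding relation by simp
    then show ?thesis
      using x by (simp add: eq_divide_eq)
  qed
  ultimately show "(mu_deriv g (v, TI) has_real_derivative
      ((x - (g - 1/2) - 1) * mu_deriv g (v, TI) x - Etil g (v, TI) / 4 * mu g (v, TI) x) / x) (at x)"
    by (simp add: mu_deriv_def)
qed

lemma laguerre_ode_mu_TII:
  "laguerre_ode (g - 1/2) (Etil g (v, TII) / 4) (mu g (v, TII)) (mu_deriv g (v, TII))"
proof
  fix x :: real assume x: "x > 0"
  let ?p = "x powr (- g - 1/2)"
  let ?La = "lag (1/2 - g) (int v) x" and ?Lb = "lag (3/2 - g) (int v - 1) x"
  have "mu g (v, TII) = (\<lambda>y. y powr (1/2 - g) * lag (1/2 - g) (int v) y)"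
    by (simp add: mu_def fun_eq_iff)
  then have "(mu g (v, TII) has_real_derivative
      x powr (1/2 - g) * - ?Lb + (1/2 - g) * x powr (1/2 - g - 1) * ?La) (at x)"
    by (simp only:) (intro DERIV_mult' has_real_derivative_powr x has_real_derivative_lag, simp)
  moreover have "x powr (1/2 - g) * - ?Lb + (1/2 - g) * x powr (1/2 - g - 1) * ?La
      = ?p * ((1/2 - g) * ?La - x * ?Lb)"
    using powr_mult_base[of x "- g - 1/2"] x by (simp add: algebra_simps)
  moreover have "(1/2 - g) * ?La - x * ?Lb = (real v + 1/2 - g) * lag (- g - 1/2) (int v) x"
    using lag_param_pred[of "3/2 - g" "1/2 - g" "- g - 1/2" "int v" x] by (simp add: algebra_simps)
  ultimately show "(mu g (v, TII) has_real_derivative mu_deriv g (v, TII) x) (at x)"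
    by (simp add: mu_deriv_def mult_ac)
next
  fix x :: real assume x: "x > 0"
  let ?K = "real v + 1/2 - g" and ?p = "x powr (- g - 1/2)"
  let ?La = "lag (1/2 - g) (int v) x" and ?Lc = "lag (- g - 1/2) (int v) x"
    and ?Ld = "lag (1/2 - g) (int v - 1) x"
  have "mu_deriv g (v, TII) = (\<lambda>y. ?K * (y powr (- g - 1/2) * lag (- g - 1/2) (int v) y))"
    by (simp add: mu_deriv_def)
  then have "(mu_deriv g (v, TII) has_real_derivative
      ?K * (x powr (- g - 1/2) * - ?Ld + (- g - 1/2) * x powr (- g - 1/2 - 1) * ?Lc)) (at x)"
    by (simp only:) (intro DERIV_cmult DERIV_mult' has_real_derivative_powr x has_real_derivative_lag, simp)
  moreover have "?K * (x powr (- g - 1/2) * - ?Ld + (- g - 1/2) * x powr (- g - 1/2 - 1) * ?Lc)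
      = ((x - (g - 1/2) - 1) * mu_deriv g (v, TII) x - Etil g (v, TII) / 4 * mu g (v, TII) x) / x"
  proof -
    have La: "?La = ?Lc + ?Ld"
      using lag_param_Suc[of "1/2 - g" "- g - 1/2" "int v" x] by simp
    have power: "x powr (- g - 1/2 - 1) = ?p / x"
      using powr_diff[of x "- g - 1/2" 1] x by simp
    have mu: "mu g (v, TII) x = x * ?p * ?La"
      using powr_mult_base[of x "- g - 1/2"] x by (simp add: mu_def)
    have mu_deriv: "mu_deriv g (v, TII) x = ?K * (?p * ?Lc)"
      by (simp add: mu_deriv_def)
    have E: "Etil g (v, TII) / 4 = ?K"
      by (simp add: Etil_def)
    show ?thesis
      unfolding mu mu_deriv E power La using x by (simp add: field_simps)
  qed
  ultimately show "(mu_deriv g (v, TII) has_real_derivative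
      ((x - (g - 1/2) - 1) * mu_deriv g (v, TII) x - Etil g (v, TII) / 4 * mu g (v, TII) x) / x) (at x)"
    by simp
qed

lemma laguerre_ode_mu: "laguerre_ode (g - 1/2) (Etil g s / 4) (mu g s) (mu_deriv g s)"
  by (cases s, rename_tac v t, case_tac t) (simp_all add: laguerre_ode_mu_TI laguerre_ode_mu_TII)

lemma laguerre_ode_Pn: "laguerre_ode (g - 1/2) (real n) (Pn g n) (\<lambda>y. - lag (g + 1/2) (int n - 1) y)"
proof
  fix x :: real assume "x > 0"
  show "(Pn g n has_real_derivative - lag (g + 1/2) (int n - 1) x) (at x)"
    unfolding Pn_def[abs_def] by (rule has_real_derivative_lag) simp
next
  fix x :: real assume x: "x > 0"
  let ?L0 = "lag (g - 1/2) (int n) x" and ?L0' = "lag (g - 1/2) (int n - 1) x"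
    and ?L1 = "lag (g + 1/2) (int n - 1) x" and ?L2 = "lag (g + 3/2) (int n - 1 - 1) x"
  have "((\<lambda>y. - lag (g + 1/2) (int n - 1) y) has_real_derivative - (- ?L2)) (at x)"
    by (intro DERIV_minus has_real_derivative_lag) simp
  moreover have "- (- ?L2) = ((x - (g - 1/2) - 1) * (- ?L1) - real n * Pn g n x) / x"
  proof -
    have "(g + 1/2) * ?L1 - x * ?L2 = (g + 1/2 + (real n - 1)) * ?L0'"
      using lag_param_pred[of "g + 3/2" "g + 1/2" "g - 1/2" "int n - 1" x] by simp
    moreover have "real n * ?L0 = (g - 1/2 + real n) * ?L0' - x * ?L1"
      using lag_degree_pred[of "g + 1/2" "g - 1/2" "int n" x] by simp
    moreover have "(x - (g - 1/2) - 1) * (- ?L1) - real n * ?L0 - x * ?L2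
        = ((g + 1/2) * ?L1 - x * ?L2 - (g + 1/2 + (real n - 1)) * ?L0')
          + ((g - 1/2 + real n) * ?L0' - x * ?L1 - real n * ?L0)"
      by (simp add: algebra_simps)
    ultimately show ?thesis
      using x by (simp add: Pn_def field_simps)
  qed
  ultimately show "((\<lambda>y. - lag (g + 1/2) (int n - 1) y) has_real_derivative
      ((x - (g - 1/2) - 1) * (- ?L1) - real n * Pn g n x) / x) (at x)"
    by simp
qed

lemma mu_eq_seed_gauge_xi: "x > 0 \<Longrightarrow> mu g s x = seed_gauge g s x * xi g s x"
  by (cases s, rename_tac v t, case_tac t) (simp_all add: mu_def seed_gauge_def xi_def)

lemma mu_deriv_eq_seed_gauge_zetatil:
  assumes x: "x > 0"
  shows "mu_deriv g s x = seed_gauge g s x * zetatil g s x / (2 * x)"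
proof (cases s)
  case (Pair v t)
  have "x powr (1/2 - g) = x * x powr (- g - 1/2)"
    using powr_mult_base[of x "- g - 1/2"] x by simp
  then show ?thesis
    using x by (cases t) (simp_all add: Pair mu_deriv_def seed_gauge_def zetatil_def field_simps)
qed

section \<open>Powers of \<open>\<eta>\<close> and the determinant formulas\<close>

lemma MI_add_MII: "MI D + MII D = length D"
  by (induction D) (auto simp: MI_def MII_def split: stype.splits, metis (full_types) stype.exhaust)

lemma prod_seed_gauge:
  "(\<Prod>k<length D. seed_gauge g (D ! k) x) = exp x ^ MI D * (x powr (1/2 - g)) ^ MII D"
proof (induction D)
  case (Cons s D)
  obtain v t where s: "s = (v, t)" by (cases s)
  have "(\<Prod>k<length (s # D). seed_gauge g ((s # D) ! k) x)
      = seed_gauge g s x * (\<Prod>k<length D. seed_gauge g (D ! k) x)"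
    unfolding length_Cons prod.lessThan_Suc_shift by simp
  then show ?case
    unfolding Cons.IH s by (cases t) (simp_all add: seed_gauge_def MI_def MII_def)
qed (simp add: MI_def MII_def)
lemma square_div_4_minus_prod:
  fixes a b d :: nat
  assumes "d \<le> 1"
  shows "real ((a + b + d) * (a + b + d) div 4) - (real a + real d) * real b
    = of_int ((\<lfloor>(real a - real b) / 2\<rfloor> + int d)
              * (\<lfloor>(real a - real b) / 2\<rfloor> + int (a + b) - 2 * \<lfloor>real (a + b) / 2\<rfloor>))"
proof -
  define q where "q = (int a - int b) div 2"
  define p where "p = (int a - int b) mod 2"
  define u where "u = q + int b"
  have p: "p = 0 \<or> p = 1" unfolding p_def by presburger
  have d: "int d = 0 \<or> int d = 1" using assms by auto
  have sum: "int (a + b) = 2 * u + p"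
    unfolding u_def q_def p_def by simp
  have "(real a - real b) / 2 = real_of_int (int a - int b) / real_of_int 2" by simp
  then have floor_diff: "\<lfloor>(real a - real b) / 2\<rfloor> = q"
    unfolding q_def by (simp only: floor_divide_of_int_eq)
  have "real (a + b) / 2 = real_of_int (int (a + b)) / real_of_int 2" by simp
  then have floor_sum: "\<lfloor>real (a + b) / 2\<rfloor> = u"
    using p by (simp only: floor_divide_of_int_eq sum) presburger
  have "int ((a + b + d) * (a + b + d) div 4) = (int (a + b) + int d)^2 div 4"
    by (simp only: zdiv_int of_nat_mult of_nat_add of_nat_numeral power2_eq_square)
  also have "\<dots> = (4 * (u * u + u * (p + int d) + p * int d) + (p - int d)^2) div 4"
    unfolding sum by (simp add: power2_eq_square algebra_simps)
  also have "\<dots> = u * u + u * (p + int d) + p * int d"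
  proof -
    have "(4 * Q + r) div 4 = Q" if "0 \<le> r" "r < 4" for Q r :: int
      using that by presburger
    moreover have "0 \<le> (p - int d)^2" "(p - int d)^2 < 4"
      using p d by auto
    ultimately show ?thesis by blast
  qed
  finally have "int ((a + b + d) * (a + b + d) div 4) = u * u + u * (p + int d) + p * int d" .
  moreover have "int a = int b + 2 * q + p"
    unfolding q_def p_def by simp
  ultimately have product: "int ((a + b + d) * (a + b + d) div 4) - (int a + int d) * int b
      = (q + int d) * (q + p)"
    unfolding u_def by (simp add: algebra_simps)
  have parity: "q + int (a + b) - 2 * u = q + p"
    using sum by simp
  show ?thesis
    unfolding floor_diff floor_sum parity product[symmetric] by simp
qed

lemma gauge_factors_eq_powr:
  fixes a b d :: nat
  assumes "d \<le> 1" and x: "x > 0"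
  shows "x powr (- real ((a + b + d) * (a + b + d) div 4)) * (exp x ^ a * (x powr (1/2 - g)) ^ b)
      * (x powr ((real a + g - 1/2 + real d) * real b) * exp (- real a * x))
    = x powr (- of_int ((\<lfloor>(real a - real b) / 2\<rfloor> + int d)
              * (\<lfloor>(real a - real b) / 2\<rfloor> + int (a + b) - 2 * \<lfloor>real (a + b) / 2\<rfloor>)))"
proof -
  have "exp x ^ a * exp (- real a * x) = 1"
    by (simp add: exp_minus flip: exp_of_nat_mult)
  then have "x powr (- real ((a + b + d) * (a + b + d) div 4)) * (exp x ^ a * (x powr (1/2 - g)) ^ b)
      * (x powr ((real a + g - 1/2 + real d) * real b) * exp (- real a * x))
    = x powr (- (real ((a + b + d) * (a + b + d) div 4) - (real a + real d) * real b))"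
    using x by (simp add: powr_power powr_add [symmetric] algebra_simps)
  then show ?thesis
    unfolding square_div_4_minus_prod[OF assms(1)] .
qed

lemma wronskian_mu:
  assumes x: "x > 0"
  shows "wronskian (map (mu g) D) x
    = 2 powr (- (real (length D) * (real (length D) - 1) / 2)) * detm (length D) (bmat g D x)
      * (x powr (- real (length D * length D div 4)) * (exp x ^ MI D * (x powr (1/2 - g)) ^ MII D))"
proof -
  let ?M = "length D"
  have "wronskian (map (mu g) D) x = detm ?M (\<lambda>j k. (deriv ^^ j) (mu g (D ! k)) x)"
    unfolding wronskian_def length_map by (rule detm_cong) simp
  also have "\<dots> = 2 powr (- (real ?M * (real ?M - 1) / 2)) * x powr (- real (?M * ?M div 4))
      * (\<Prod>k<?M. seed_gauge g (D ! k) x)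
      * detm ?M (\<lambda>j k. (-4 * (Etil g (D ! k) / 4))^(j div 2)
                       * (if even j then xi g (D ! k) x else zetatil g (D ! k) x))"
    by (rule detm_higher_derivs_laguerre_ode[OF x, where \<alpha> = "g - 1/2" and df = "\<lambda>k. mu_deriv g (D ! k)"])
      (simp_all add: laguerre_ode_mu mu_eq_seed_gauge_xi[OF x] mu_deriv_eq_seed_gauge_zetatil[OF x])
  also have "detm ?M (\<lambda>j k. (-4 * (Etil g (D ! k) / 4))^(j div 2)
                       * (if even j then xi g (D ! k) x else zetatil g (D ! k) x))
      = detm ?M (bmat g D x)"
    by (rule detm_cong) (simp add: bmat_def)
  finally show ?thesis
    by (simp add: prod_seed_gauge mult_ac)
qed

lemma wronskian_mu_Pn:
  assumes x: "x > 0"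
  shows "wronskian (map (mu g) D @ [Pn g n]) x
    = 2 powr (- (real (length D) * (real (length D) + 1) / 2)) * detm (length D + 1) (amat g D n x)
      * (x powr (- real ((length D + 1) * (length D + 1) div 4))
         * (exp x ^ MI D * (x powr (1/2 - g)) ^ MII D))"
proof -
  let ?M = "length D"
  define f where "f k = (if k < ?M then mu g (D ! k) else Pn g n)" for k
  define df where
    "df k = (if k < ?M then mu_deriv g (D ! k) else (\<lambda>y. - lag (g + 1/2) (int n - 1) y))" for k
  define c where "c k = (if k < ?M then seed_gauge g (D ! k) x else 1)" for k
  have "wronskian (map (mu g) D @ [Pn g n]) x = detm (?M + 1) (\<lambda>j k. (deriv ^^ j) (f k) x)"
    unfolding wronskian_def length_append_singleton length_map Suc_eq_plus1
    by (rule detm_cong) (auto simp: nth_append f_def)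
  also have "\<dots> = 2 powr (- (real (?M + 1) * (real (?M + 1) - 1) / 2))
      * x powr (- real ((?M + 1) * (?M + 1) div 4)) * (\<Prod>k<?M + 1. c k)
      * detm (?M + 1) (\<lambda>j k. (-4 * (if k < ?M then Etil g (D ! k) / 4 else real n))^(j div 2)
          * (if even j then (if k < ?M then xi g (D ! k) x else lag (g - 1/2) (int n) x)
             else (if k < ?M then zetatil g (D ! k) x else zetan g n x)))"
    by (rule detm_higher_derivs_laguerre_ode[OF x, where \<alpha> = "g - 1/2" and df = df])
      (use x in \<open>simp_all add: f_def df_def c_def laguerre_ode_mu laguerre_ode_Pn
        mu_eq_seed_gauge_xi mu_deriv_eq_seed_gauge_zetatil Pn_def zetan_def\<close>)
  also have "detm (?M + 1) (\<lambda>j k. (-4 * (if k < ?M then Etil g (D ! k) / 4 else real n))^(j div 2)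
          * (if even j then (if k < ?M then xi g (D ! k) x else lag (g - 1/2) (int n) x)
             else (if k < ?M then zetatil g (D ! k) x else zetan g n x)))
      = detm (?M + 1) (amat g D n x)"
    by (rule detm_cong) (simp add: amat_def En_def)
  also have "(\<Prod>k<?M + 1. c k) = (\<Prod>k<?M. seed_gauge g (D ! k) x)"
    by (simp add: c_def)
  also have "real (?M + 1) * (real (?M + 1) - 1) / 2 = real ?M * (real ?M + 1) / 2"
    by simp
  finally show ?thesis
    by (simp add: prod_seed_gauge mult_ac)
qed

lemma Xi_eq_detm_bmat:
  assumes "x > 0"
  shows "Xi g D x = 2 powr (- (real (length D) * (real (length D) - 1) / 2)) * detm (length D) (bmat g D x)
    * x powr (- of_int (\<lfloor>(real (MI D) - real (MII D)) / 2\<rfloor>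
        * (\<lfloor>(real (MI D) - real (MII D)) / 2\<rfloor> + int (length D) - 2 * \<lfloor>real (length D) / 2\<rfloor>)))"
  using gauge_factors_eq_powr[of 0 x "MI D" "MII D" g] assms
  unfolding Xi_def wronskian_mu[OF assms] MI_add_MII by (simp add: mult_ac)

lemma PD_eq_detm_amat:
  assumes "x > 0"
  shows "PD g D n x = 2 powr (- (real (length D) * (real (length D) + 1) / 2))
      * detm (length D + 1) (amat g D n x)
    * x powr (- of_int ((\<lfloor>(real (MI D) - real (MII D)) / 2\<rfloor> + 1)
        * (\<lfloor>(real (MI D) - real (MII D)) / 2\<rfloor> + int (length D) - 2 * \<lfloor>real (length D) / 2\<rfloor>)))"
proof -
  have "(real (MI D) + g + 1/2) * real (MII D) = (real (MI D) + g - 1/2 + real (1::nat)) * real (MII D)"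
    by simp
  then show ?thesis
    using gauge_factors_eq_powr[of 1 x "MI D" "MII D" g] assms
    unfolding PD_def wronskian_mu_Pn[OF assms] MI_add_MII by (simp only:) (simp add: mult_ac)
qed

theorem mainTheorem3:
  fixes g :: real and D :: "seed list" and n :: nat and \<eta> :: real
  assumes hg: "g > 1/2"
    and hvalid: "\<forall>s\<in>set D. valid_seed g s"
    and hdist: "distinct D"
    and heta: "\<eta> > 0"
  defines "M \<equiv> length D"
    and "M' \<equiv> (real (MI D) - real (MII D)) / 2"
  shows "PD g D n \<eta> = 2 powr (- (real M * (real M + 1) / 2)) * detm (M + 1) (amat g D n \<eta>)
           * \<eta> powr (- real_of_int ((\<lfloor>M'\<rfloor> + 1) * (\<lfloor>M'\<rfloor> + int M - 2 * \<lfloor>real M / 2\<rfloor>)))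
         \<and> Xi g D \<eta> = 2 powr (- (real M * (real M - 1) / 2)) * detm M (bmat g D \<eta>)
           * \<eta> powr (- real_of_int (\<lfloor>M'\<rfloor> * (\<lfloor>M'\<rfloor> + int M - 2 * \<lfloor>real M / 2\<rfloor>)))"
  unfolding M_def M'_def using PD_eq_detm_amat[OF heta] Xi_eq_detm_bmat[OF heta] by blast

end
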